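(* Let $M^\star\in\mathbb{R}^{m\times n}$, $k=\min(m,n)$, and let $M^\star=P\Sigma Q^\top$ be a singular value decomposition with $P\in\mathbb{R}^{m\times k}$, $Q\in\mathbb{R}^{n\times k}$ having orthonormal columns and $\Sigma=\mathrm{diag}(\sigma_1,\dots,\sigma_k)$, $\sigma_i\ge0$. Consider, for $W\in\mathbb{R}^{m\times n}$, $$\Phi(W)=\frac14\|W-2M^\star\|_F^2+\frac1{4k}\|W\|_\star^2.$$ Then $\Phi$ admits a unique global minimizer $W^\star$. Moreover, there exists a minimizer whose left and right singular subspaces coincide with those of $M^\star$, and such a minimizer can be written as $W^\star=P\,\mathrm{diag}(w_1,\dots,w_k)\,Q^\top$, where the $w_i\ge0$ are uniquely determined by $$w_i=\max(0,\,2\sigma_i-\lambda),\quad i=1,\dots,k,\qquad\text{with}\qquad \lambda=\frac1k\sum_{j=1}^kw_j.$$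
   Context: $\|\cdot\|_F$ is the Frobenius norm and $\|\cdot\|_\star$ the nuclear norm (sum of singular values). *)

theory Defs
  imports "Jordan_Normal_Form.Matrix"
begin

definition frob_norm :: "real mat \<Rightarrow> real" where
  "frob_norm A = sqrt (\<Sum>i<dim_row A. \<Sum>j<dim_col A. (A $$ (i, j))\<^sup>2)"

definition is_svd :: "real mat \<Rightarrow> real mat \<Rightarrow> (nat \<Rightarrow> real) \<Rightarrow> real mat \<Rightarrow> bool" where
  "is_svd A P s Q \<longleftrightarrow>
     (let m = dim_row A; n = dim_col A; k = min m n in
       P \<in> carrier_mat m k \<and> Q \<in> carrier_mat n k \<and>
       transpose_mat P * P = 1\<^sub>m k \<and> transpose_mat Q * Q = 1\<^sub>m k \<and>
       (\<forall>i<k. 0 \<le> s i) \<and>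
       A = P * mat_diag k s * transpose_mat Q)"

text \<open>Nuclear norm: sum of the singular values (taken from any SVD; this sum
  does not depend on the chosen SVD).\<close>
definition nuclear_norm :: "real mat \<Rightarrow> real" where
  "nuclear_norm A = (THE t. \<exists>P s Q. is_svd A P s Q \<and>
        t = (\<Sum>i<min (dim_row A) (dim_col A). s i))"

end

theory Submission
  imports Defs "Jordan_Normal_Form.Spectral_Radius"
begin

text \<open>Let \<open>\<tau> \<ge> 0\<close> be the root of \<open>\<Sum>\<^sub>i max 0 (2\<sigma>\<^sub>i - \<tau>) = k \<tau>\<close> (the left side is
  non-increasing and the right side increasing in \<open>\<tau>\<close>), \<open>w\<^sub>i = max 0 (2\<sigma>\<^sub>i - \<tau>)\<close> and \<open>Wstar = P diag(w) Q\<^sup>T\<close>;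
  then \<open>\<tau>\<close> is the mean of the \<open>w\<^sub>i\<close>. With \<open>g\<^sub>i = min 1 (2\<sigma>\<^sub>i / \<tau>)\<close> the matrix
  \<open>G = P diag(g) Q\<^sup>T\<close> satisfies \<open>2 Mstar - Wstar = \<tau> G\<close> and
  \<open>\<langle>G, Wstar\<rangle> = nuclear_norm Wstar = k \<tau>\<close>, while \<open>\<langle>G, W\<rangle> \<le> nuclear_norm W\<close> for every \<open>W\<close>:
  pairing an SVD of \<open>W\<close> with a contraction \<open>\<alpha> diag(g) \<beta>\<^sup>T\<close> never exceeds the sum of the
  singular values, by Bessel's inequality. Expanding the square then gives
  \<open>\<Phi> W \<ge> \<Phi> Wstar + (frob_norm (W - Wstar))\<^sup>2 / 4\<close>, so \<open>Wstar\<close> is the unique minimiser.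
  As the nuclear norm is defined through an arbitrary SVD, one also needs that SVDs exist and
  that the sum of singular values does not depend on the SVD; the latter is the same duality
  bound applied in both directions. For existence, singular triples are added one at a time
  from unit eigenvectors of \<open>W\<^sup>T W\<close> (or of \<open>W W\<^sup>T\<close>) orthogonal to those already found; real
  symmetric matrices have real eigenvectors because their complex eigenvalues are real.\<close>

section \<open>Vectors and orthonormal families\<close>

text \<open>A vector of \<open>\<real>^n\<close> is a function \<open>nat \<Rightarrow> real\<close> of which only the entries below \<open>n\<close>
  matter, a matrix is a function of two indices, and a family of \<open>r\<close> vectors is a function
  \<open>v\<close> with members \<open>v a\<close> for \<open>a < r\<close>.\<close>

definition dot :: "nat \<Rightarrow> (nat \<Rightarrow> real) \<Rightarrow> (nat \<Rightarrow> real) \<Rightarrow> real" where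
  "dot n x y = (\<Sum>i<n. x i * y i)"

definition mat_vec :: "nat \<Rightarrow> (nat \<Rightarrow> nat \<Rightarrow> real) \<Rightarrow> (nat \<Rightarrow> real) \<Rightarrow> nat \<Rightarrow> real" where
  "mat_vec n A x i = (\<Sum>j<n. A i j * x j)"

definition transposed :: "('a \<Rightarrow> 'b \<Rightarrow> 'c) \<Rightarrow> 'b \<Rightarrow> 'a \<Rightarrow> 'c" where
  "transposed A j i = A i j"

definition orthonormal :: "nat \<Rightarrow> nat \<Rightarrow> (nat \<Rightarrow> nat \<Rightarrow> real) \<Rightarrow> bool" where
  "orthonormal n r v \<longleftrightarrow> (\<forall>a<r. \<forall>b<r. dot n (v a) (v b) = (if a = b then 1 else 0))"

lemma transposed_transposed [simp]: "transposed (transposed A) = A"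
  by (simp add: fun_eq_iff transposed_def)

lemma dot_commute: "dot n x y = dot n y x"
  by (simp add: dot_def mult.commute)

lemma dot_self_nonneg: "0 \<le> dot n x x"
  by (simp add: dot_def sum_nonneg)

lemma dot_self_eq_0_iff: "dot n x x = 0 \<longleftrightarrow> (\<forall>i<n. x i = 0)"
  unfolding dot_def by (subst sum_nonneg_eq_0_iff) auto

lemma dot_scale_left: "dot n (\<lambda>i. c * x i) y = c * dot n x y"
  by (simp add: dot_def sum_distrib_left algebra_simps)

lemma dot_scale_right: "dot n x (\<lambda>i. c * y i) = c * dot n x y"
  by (simp add: dot_def sum_distrib_left algebra_simps)

lemma dot_sum_left: "dot n (\<lambda>i. \<Sum>a\<in>A. f a i) y = (\<Sum>a\<in>A. dot n (f a) y)"
  unfolding dot_def sum_distrib_right by (rule sum.swap)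

lemma dot_sum_right: "dot n x (\<lambda>i. \<Sum>a\<in>A. f a i) = (\<Sum>a\<in>A. dot n x (f a))"
  unfolding dot_def sum_distrib_left by (rule sum.swap)

lemma dot_cong:
  "(\<And>i. i < n \<Longrightarrow> x i = x' i) \<Longrightarrow> (\<And>i. i < n \<Longrightarrow> y i = y' i) \<Longrightarrow> dot n x y = dot n x' y'"
  by (simp add: dot_def)

lemma dot_mat_vec_transposed: "dot m u (mat_vec n A x) = dot n (mat_vec m (transposed A) u) x"
  unfolding dot_def mat_vec_def transposed_def
  by (simp add: sum_distrib_left sum_distrib_right mult_ac) (subst sum.swap, simp add: mult_ac)

lemma dot_mat_vec_symmetric:
  assumes "\<And>i j. i < n \<Longrightarrow> j < n \<Longrightarrow> B i j = B j i"
  shows "dot n x (mat_vec n B y) = dot n (mat_vec n B x) y"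
  unfolding dot_mat_vec_transposed
  using assms by (intro dot_cong) (auto simp: mat_vec_def transposed_def intro: sum.cong)

lemma mat_vec_scale: "mat_vec n A (\<lambda>j. c * x j) = (\<lambda>i. c * mat_vec n A x i)"
  by (simp add: fun_eq_iff mat_vec_def sum_distrib_left mult_ac)

lemma mat_vec_sum: "mat_vec n A (\<lambda>j. \<Sum>b\<in>B. f b j) = (\<lambda>i. \<Sum>b\<in>B. mat_vec n A (f b) i)"
  unfolding fun_eq_iff mat_vec_def sum_distrib_left by (auto intro: sum.swap)

lemma dot_unit_multiple:
  assumes "0 < dot n x x"
  obtains c where "dot n (\<lambda>i. c * x i) (\<lambda>i. c * x i) = 1"
proof
  let ?t = "1 / sqrt (dot n x x)"
  have "dot n (\<lambda>i. ?t * x i) (\<lambda>i. ?t * x i) = ?t * (?t * dot n x x)"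
    by (simp only: dot_scale_left dot_scale_right)
  then show "dot n (\<lambda>i. ?t * x i) (\<lambda>i. ?t * x i) = 1"
    using assms by simp
qed

lemma orthonormal_upd:
  assumes "orthonormal n r v" "\<forall>a<r. dot n (v a) w = 0" "dot n w w = 1"
  shows "orthonormal n (Suc r) (v(r := w))"
  unfolding orthonormal_def
proof (intro allI impI)
  fix a b assume "a < Suc r" "b < Suc r"
  then consider "a < r" "b < r" | "a < r" "b = r" | "a = r" "b < r" | "a = r" "b = r"
    by linarith
  moreover have "\<forall>a<r. dot n w (v a) = 0"
    using assms(2) by (simp add: dot_commute)
  ultimately show "dot n ((v(r := w)) a) ((v(r := w)) b) = (if a = b then 1 else 0)"
    using assms by cases (auto simp: orthonormal_def)
qed

lemma orthonormal_rows:
  assumes "orthonormal n n v" "j < n" "l < n"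
  shows "(\<Sum>a<n. v a j * v a l) = (if j = l then 1 else 0)"
proof -
  define V where "V = mat n n (\<lambda>(i, a). v a i)"
  have V: "V \<in> carrier_mat n n" unfolding V_def by simp
  have "transpose_mat V * V = 1\<^sub>m n"
    using assms(1) by (intro eq_matI)
      (auto simp: V_def orthonormal_def dot_def scalar_prod_def atLeast0LessThan)
  then have "V * transpose_mat V = 1\<^sub>m n"
    using mat_mult_left_right_inverse[of "transpose_mat V" n V] V by simp
  then have "(V * transpose_mat V) $$ (j, l) = (if j = l then 1 else 0)"
    using assms by simp
  then show ?thesis
    using assms by (simp add: V_def scalar_prod_def atLeast0LessThan)
qed

lemma orthonormal_expansion:
  assumes "orthonormal n n v" "j < n"
  shows "z j = (\<Sum>a<n. v a j * dot n (v a) z)"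
proof -
  have "(\<Sum>a<n. v a j * dot n (v a) z) = (\<Sum>i<n. z i * (\<Sum>a<n. v a j * v a i))"
    by (simp add: dot_def sum_distrib_left sum_distrib_right mult_ac)
       (subst sum.swap, simp add: mult_ac)
  also have "\<dots> = z j"
    using assms by (simp add: orthonormal_rows if_distrib cong: if_cong)
  finally show ?thesis by simp
qed

lemma orthonormal_exists_orthogonal_unit:
  assumes "orthonormal n r v" "r < n"
  obtains w where "\<forall>a<r. dot n (v a) w = 0" "dot n w w = 1"
proof -
  \<comment> \<open>Residual of the unit vector \<open>e\<^sub>j\<close> after projection onto the \<open>v a\<close>; if all
    residuals vanished, summing their diagonal entries would give \<open>n = r\<close>.\<close>
  define c where "c j i = (if i = j then 1 else 0) - (\<Sum>a<r. v a j * v a i)" for j i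
  have "\<exists>j<n. \<exists>i<n. c j i \<noteq> 0"
  proof (rule ccontr)
    assume "\<not> ?thesis"
    then have "c j j = 0" if "j < n" for j
      using that by blast
    then have "(\<Sum>a<r. v a j * v a j) = 1" if "j < n" for j
      using that by (simp add: c_def)
    then have "real n = (\<Sum>j<n. \<Sum>a<r. v a j * v a j)"
      by simp
    also have "\<dots> = (\<Sum>a<r. dot n (v a) (v a))"
      unfolding dot_def by (rule sum.swap)
    also have "\<dots> = real r"
      using assms(1) by (simp add: orthonormal_def)
    finally show False using assms(2) by simp
  qed
  then obtain j i where ji: "j < n" "i < n" "c j i \<noteq> 0" by auto
  have orth: "dot n (v b) (c j) = 0" if "b < r" for b
  proof -
    have "dot n (v b) (c j) = dot n (v b) (\<lambda>i. if i = j then 1 else 0)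
        - dot n (v b) (\<lambda>i. \<Sum>a<r. v a j * v a i)"
      by (simp add: c_def dot_def sum_subtractf algebra_simps)
    also have "dot n (v b) (\<lambda>i. if i = j then 1 else 0) = v b j"
      using ji(1) by (simp add: dot_def if_distrib cong: if_cong)
    also have "dot n (v b) (\<lambda>i. \<Sum>a<r. v a j * v a i) = (\<Sum>a<r. v a j * dot n (v b) (v a))"
      by (simp add: dot_sum_right dot_scale_right)
    also have "\<dots> = (\<Sum>a<r. v a j * (if b = a then 1 else 0))"
      using assms(1) that by (intro sum.cong) (auto simp: orthonormal_def)
    also have "\<dots> = v b j"
      using that by (simp add: if_distrib cong: if_cong)
    finally show ?thesis by simp
  qed
  have "0 < dot n (c j) (c j)"
    using ji dot_self_eq_0_iff[of n "c j"] dot_self_nonneg[of n "c j"] by fastforce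
  then obtain t where "dot n (\<lambda>i. t * c j i) (\<lambda>i. t * c j i) = 1"
    by (rule dot_unit_multiple)
  moreover have "\<forall>a<r. dot n (v a) (\<lambda>i. t * c j i) = 0"
    using orth by (simp add: dot_scale_right)
  ultimately show ?thesis
    using that by blast
qed

lemma orthonormal_extend_to_basis:
  assumes "orthonormal n r v" "r \<le> n"
  shows "\<exists>v'. orthonormal n n v' \<and> (\<forall>a<r. v' a = v a)"
  using assms
proof (induction "n - r" arbitrary: r v)
  case 0
  then show ?case by auto
next
  case (Suc d)
  then have "r < n" by simp
  obtain w where w: "\<forall>a<r. dot n (v a) w = 0" "dot n w w = 1"
    by (rule orthonormal_exists_orthogonal_unit[OF Suc.prems(1) \<open>r < n\<close>])
  have "orthonormal n (Suc r) (v(r := w))"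
    using Suc.prems(1) w by (rule orthonormal_upd)
  moreover have "d = n - Suc r" "Suc r \<le> n" using Suc.hyps(2) by auto
  ultimately obtain v' where "orthonormal n n v'" "\<forall>a<Suc r. v' a = (v(r := w)) a"
    using Suc.hyps(1) by blast
  then show ?case by auto
qed

section \<open>Eigenvectors of real symmetric matrices\<close>

lemma unit_eigenvector:
  assumes "0 < dot d y y" "\<forall>a<d. mat_vec d B y a = \<mu> * y a"
  shows "\<exists>y \<mu>. dot d y y = 1 \<and> (\<forall>a<d. mat_vec d B y a = \<mu> * y a)"
proof -
  obtain c where "dot d (\<lambda>i. c * y i) (\<lambda>i. c * y i) = 1"
    using dot_unit_multiple[OF assms(1)] .
  then show ?thesis
    using assms(2) by (intro exI[of _ "\<lambda>i. c * y i"] exI[of _ \<mu>]) (simp add: mat_vec_scale)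
qed

text \<open>\<open>p + i q\<close> is an eigenvector of \<open>B\<close> for the eigenvalue \<open>\<alpha> + i \<beta>\<close>; pairing the two equations
  with \<open>q\<close> and \<open>p\<close> and using symmetry gives \<open>\<beta> (|p|\<^sup>2 + |q|\<^sup>2) = 0\<close>.\<close>
lemma symmetric_complex_eigenvalue_real:
  assumes sym: "\<And>a b. a < d \<Longrightarrow> b < d \<Longrightarrow> B a b = B b a"
    and Bp: "\<forall>i<d. mat_vec d B p i = \<alpha> * p i - \<beta> * q i"
    and Bq: "\<forall>i<d. mat_vec d B q i = \<alpha> * q i + \<beta> * p i"
    and "0 < dot d p p + dot d q q"
  shows "\<beta> = 0"
proof -
  have "dot d p (\<lambda>i. \<alpha> * q i + \<beta> * p i) = dot d p (mat_vec d B q)"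
    using Bq by (intro dot_cong) auto
  also have "\<dots> = dot d (mat_vec d B p) q"
    using sym by (rule dot_mat_vec_symmetric)
  also have "\<dots> = dot d (\<lambda>i. \<alpha> * p i - \<beta> * q i) q"
    using Bp by (intro dot_cong) auto
  finally have "\<beta> * (dot d p p + dot d q q) = 0"
    by (simp add: dot_def sum.distrib sum_subtractf sum_distrib_left algebra_simps)
  then show ?thesis
    using assms(4) by simp
qed

lemma symmetric_unit_eigenvector:
  assumes "0 < d" and sym: "\<And>a b. a < d \<Longrightarrow> b < d \<Longrightarrow> B a b = B b a"
  shows "\<exists>y \<mu>. dot d y y = 1 \<and> (\<forall>a<d. mat_vec d B y a = \<mu> * y a)"
proof -
  define C where "C = mat d d (\<lambda>(i, j). complex_of_real (B i j))"
  have C: "C \<in> carrier_mat d d" unfolding C_def by simp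
  obtain z where "eigenvalue C z"
    using spectrum_non_empty[OF C \<open>0 < d\<close>] unfolding spectrum_def by auto
  then obtain x where x: "x \<in> carrier_vec d" "x \<noteq> 0\<^sub>v d" "C *\<^sub>v x = z \<cdot>\<^sub>v x"
    unfolding eigenvalue_def eigenvector_def using C by auto
  define p where "p = (\<lambda>i. Re (x $ i))"
  define q where "q = (\<lambda>i. Im (x $ i))"
  have eq: "(\<Sum>j<d. complex_of_real (B i j) * x $ j) = z * x $ i" if "i < d" for i
    using arg_cong[OF x(3), of "\<lambda>y. y $ i"] that x(1)
    by (simp add: C_def scalar_prod_def atLeast0LessThan)
  have Bp: "\<forall>i<d. mat_vec d B p i = Re z * p i - Im z * q i"
    using arg_cong[OF eq, of _ Re] by (simp add: Re_sum mat_vec_def p_def q_def)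
  have Bq: "\<forall>i<d. mat_vec d B q i = Re z * q i + Im z * p i"
    using arg_cong[OF eq, of _ Im] by (simp add: Im_sum mat_vec_def p_def q_def algebra_simps)
  have "\<not> (\<forall>i<d. x $ i = 0)"
  proof
    assume "\<forall>i<d. x $ i = 0"
    then have "x = 0\<^sub>v d" using x(1) by (intro eq_vecI) auto
    then show False using x(2) by simp
  qed
  then have "dot d p p \<noteq> 0 \<or> dot d q q \<noteq> 0"
    using dot_self_eq_0_iff by (auto simp: p_def q_def complex_eq_iff)
  then have pos: "0 < dot d p p \<or> 0 < dot d q q"
    using dot_self_nonneg[of d p] dot_self_nonneg[of d q] by linarith
  then have "Im z = 0"
    using symmetric_complex_eigenvalue_real[OF sym Bp Bq]
      dot_self_nonneg[of d p] dot_self_nonneg[of d q] by linarith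
  then show ?thesis
    using pos unit_eigenvector[of d p B "Re z"] unit_eigenvector[of d q B "Re z"] Bp Bq by auto
qed

lemma orthonormal_coordinates_eq:
  assumes "orthonormal n n v" "\<And>a. a < n \<Longrightarrow> dot n (v a) z = dot n (v a) z'" "j < n"
  shows "z j = z' j"
proof -
  have "z j = (\<Sum>a<n. v a j * dot n (v a) z)"
    by (rule orthonormal_expansion[OF assms(1,3)])
  also have "\<dots> = (\<Sum>a<n. v a j * dot n (v a) z')"
    using assms(2) by (intro sum.cong) auto
  also have "\<dots> = z' j"
    by (rule orthonormal_expansion[OF assms(1,3), symmetric])
  finally show ?thesis .
qed

lemma orthonormal_dot_shifted_combination:
  assumes "orthonormal (r + d) (r + d) v" "c < r + d"
  shows "dot (r + d) (v c) (\<lambda>j. \<Sum>b<d. y b * v (r + b) j) = (if c < r then 0 else y (c - r))"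
proof -
  have "dot (r + d) (v c) (\<lambda>j. \<Sum>b<d. y b * v (r + b) j) =
      (\<Sum>b<d. y b * dot (r + d) (v c) (v (r + b)))"
    by (simp add: dot_sum_right dot_scale_right)
  also have "\<dots> = (\<Sum>b<d. y b * (if c = r + b then 1 else 0))"
    using assms by (intro sum.cong) (auto simp: orthonormal_def)
  also have "\<dots> = (if c < r then 0 else y (c - r))"
  proof (cases "c < r")
    case False
    then have "(\<Sum>b<d. y b * (if c = r + b then 1 else 0)) = (\<Sum>b<d. if b = c - r then y b else 0)"
      by (intro sum.cong) auto
    also have "\<dots> = y (c - r)"
      using False assms(2) by simp
    finally show ?thesis
      using False by simp
  qed (auto intro: sum.neutral)
  finally show ?thesis .
qed

lemma symmetric_eigenvector_orthogonal:
  assumes "r < n" and v: "orthonormal n r v"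
    and sym: "\<And>i j. i < n \<Longrightarrow> j < n \<Longrightarrow> B i j = B j i"
    and invariant: "\<And>a x. a < r \<Longrightarrow> \<forall>b<r. dot n (v b) x = 0 \<Longrightarrow> dot n (v a) (mat_vec n B x) = 0"
  shows "\<exists>x \<mu>. dot n x x = 1 \<and> (\<forall>a<r. dot n (v a) x = 0) \<and> (\<forall>j<n. mat_vec n B x j = \<mu> * x j)"
proof -
  \<comment> \<open>Compress \<open>B\<close> to the orthogonal complement of the \<open>v a\<close>, written in an orthonormal
    basis \<open>v' (r + a)\<close> of it, and lift an eigenvector of the compression.\<close>
  obtain v' where v': "orthonormal n n v'" and agree: "\<forall>a<r. v' a = v a"
    using orthonormal_extend_to_basis[OF v] \<open>r < n\<close> by auto
  define d where "d = n - r"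
  have "0 < d" and n: "n = r + d" using \<open>r < n\<close> by (auto simp: d_def)
  define C where "C a b = dot n (v' (r + a)) (mat_vec n B (v' (r + b)))" for a b
  have "C a b = C b a" for a b
  proof -
    have "C a b = dot n (mat_vec n B (v' (r + a))) (v' (r + b))"
      unfolding C_def using sym by (rule dot_mat_vec_symmetric)
    also have "\<dots> = C b a"
      unfolding C_def by (rule dot_commute)
    finally show ?thesis .
  qed
  then obtain y \<mu> where y: "dot d y y = 1" and eig: "\<forall>a<d. mat_vec d C y a = \<mu> * y a"
    using symmetric_unit_eigenvector[OF \<open>0 < d\<close>] by blast
  define x where "x = (\<lambda>j. \<Sum>b<d. y b * v' (r + b) j)"
  have coord: "dot n (v' c) x = (if c < r then 0 else y (c - r))" if "c < n" for c
    using orthonormal_dot_shifted_combination[of r d v' c y] v' that unfolding n x_def by simp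
  have perp: "\<forall>a<r. dot n (v a) x = 0"
  proof (intro allI impI)
    fix a assume "a < r"
    then show "dot n (v a) x = 0"
      using coord[of a] agree n by auto
  qed
  have "dot n x x = (\<Sum>b<d. y b * dot n (v' (r + b)) x)"
    by (subst (1) x_def) (simp add: dot_sum_left dot_scale_left)
  also have "\<dots> = 1"
    using y coord n by (simp add: dot_def)
  finally have "dot n x x = 1" .
  moreover have "mat_vec n B x j = \<mu> * x j" if "j < n" for j
  proof (rule orthonormal_coordinates_eq[OF v' _ that])
    fix c assume "c < n"
    show "dot n (v' c) (mat_vec n B x) = dot n (v' c) (\<lambda>j. \<mu> * x j)"
    proof (cases "c < r")
      case True
      then show ?thesis
        using invariant[OF True perp] agree coord[OF \<open>c < n\<close>] by (simp add: dot_scale_right)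
    next
      case False
      define a where "a = c - r"
      have c: "c = r + a" "a < d" using False \<open>c < n\<close> n by (auto simp: a_def)
      have "mat_vec n B x = (\<lambda>i. \<Sum>b<d. y b * mat_vec n B (v' (r + b)) i)"
        by (simp add: x_def mat_vec_sum mat_vec_scale)
      then have "dot n (v' c) (mat_vec n B x) = (\<Sum>b<d. y b * C a b)"
        by (simp add: c C_def dot_sum_right dot_scale_right)
      also have "\<dots> = \<mu> * y a"
        using eig c(2) by (simp add: mat_vec_def mult.commute)
      finally show ?thesis
        using coord[OF \<open>c < n\<close>] c by (simp add: dot_scale_right)
    qed
  qed
  ultimately show ?thesis
    using perp by blast
qed

section \<open>Existence of singular value decompositions\<close>

definition gram :: "nat \<Rightarrow> (nat \<Rightarrow> nat \<Rightarrow> real) \<Rightarrow> nat \<Rightarrow> nat \<Rightarrow> real" where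
  "gram m W i j = (\<Sum>l<m. W l i * W l j)"

lemma mat_vec_gram: "mat_vec n (gram m W) x = mat_vec m (transposed W) (mat_vec n W x)"
  unfolding fun_eq_iff mat_vec_def gram_def transposed_def
  by (simp add: sum_distrib_left sum_distrib_right mult_ac) (subst sum.swap, simp add: mult_ac)

lemma gram_eigenvalue:
  assumes "dot n x x = 1" "\<forall>j<n. mat_vec n (gram m W) x j = \<mu> * x j"
  shows "dot m (mat_vec n W x) (mat_vec n W x) = \<mu>"
proof -
  have "dot m (mat_vec n W x) (mat_vec n W x) = dot n (mat_vec n (gram m W) x) x"
    by (simp add: mat_vec_gram dot_mat_vec_transposed)
  also have "\<dots> = dot n (\<lambda>j. \<mu> * x j) x"
    using assms(2) by (intro dot_cong) auto
  finally show ?thesis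
    using assms(1) by (simp add: dot_scale_left)
qed

definition outer_sum ::
    "nat \<Rightarrow> (nat \<Rightarrow> nat \<Rightarrow> real) \<Rightarrow> (nat \<Rightarrow> real) \<Rightarrow> (nat \<Rightarrow> nat \<Rightarrow> real) \<Rightarrow> nat \<Rightarrow> nat \<Rightarrow> real"
  where "outer_sum k u s v i j = (\<Sum>a<k. u a i * s a * v a j)"

definition partial_svd :: "nat \<Rightarrow> nat \<Rightarrow> (nat \<Rightarrow> nat \<Rightarrow> real) \<Rightarrow> nat \<Rightarrow>
    (nat \<Rightarrow> nat \<Rightarrow> real) \<Rightarrow> (nat \<Rightarrow> nat \<Rightarrow> real) \<Rightarrow> (nat \<Rightarrow> real) \<Rightarrow> bool" where
  "partial_svd m n W r u v s \<longleftrightarrow> orthonormal m r u \<and> orthonormal n r v \<and>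
     (\<forall>a<r. 0 \<le> s a \<and> (\<forall>i<m. mat_vec n W (v a) i = s a * u a i) \<and>
        (\<forall>j<n. mat_vec m (transposed W) (u a) j = s a * v a j))"

lemma partial_svd_transposed:
  "partial_svd n m (transposed W) r v u s \<longleftrightarrow> partial_svd m n W r u v s"
  unfolding partial_svd_def by auto

lemma partial_svd_upd:
  assumes "partial_svd m n W r u v s"
    and "dot m y y = 1" "\<forall>a<r. dot m (u a) y = 0"
    and "dot n x x = 1" "\<forall>a<r. dot n (v a) x = 0"
    and "0 \<le> t" "\<forall>i<m. mat_vec n W x i = t * y i" "\<forall>j<n. mat_vec m (transposed W) y j = t * x j"
  shows "partial_svd m n W (Suc r) (u(r := y)) (v(r := x)) (s(r := t))"
  using assms unfolding partial_svd_def by (auto intro: orthonormal_upd simp: less_Suc_eq)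

lemma partial_svd_image_orthogonal:
  assumes "partial_svd m n W r u v s" "a < r" "dot n (v a) x = 0"
  shows "dot m (u a) (mat_vec n W x) = 0"
proof -
  have "dot m (u a) (mat_vec n W x) = dot n (mat_vec m (transposed W) (u a)) x"
    by (rule dot_mat_vec_transposed)
  also have "\<dots> = dot n (\<lambda>j. s a * v a j) x"
    using assms(1,2) unfolding partial_svd_def by (intro dot_cong) auto
  finally show ?thesis
    using assms(3) by (simp add: dot_scale_left)
qed

lemma partial_svd_gram_eigenvector:
  assumes svd: "partial_svd m n W r u v s" and "r < n"
  shows "\<exists>x \<mu>. dot n x x = 1 \<and> (\<forall>a<r. dot n (v a) x = 0) \<and>
    (\<forall>j<n. mat_vec n (gram m W) x j = \<mu> * x j)"
proof (rule symmetric_eigenvector_orthogonal[OF \<open>r < n\<close>])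
  show "orthonormal n r v"
    using svd by (simp add: partial_svd_def)
  show "gram m W i j = gram m W j i" for i j
    by (simp add: gram_def mult.commute)
  fix a x assume a: "a < r" and x: "\<forall>b<r. dot n (v b) x = 0"
  have "dot n (v a) (mat_vec n (gram m W) x) = dot m (mat_vec n W (v a)) (mat_vec n W x)"
    using dot_mat_vec_transposed[of n "v a" m "transposed W"] by (simp add: mat_vec_gram)
  also have "\<dots> = dot m (\<lambda>i. s a * u a i) (mat_vec n W x)"
    using svd a by (intro dot_cong) (auto simp: partial_svd_def)
  also have "\<dots> = 0"
    using partial_svd_image_orthogonal[OF svd a] x a by (simp add: dot_scale_left)
  finally show "dot n (v a) (mat_vec n (gram m W) x) = 0" .
qed

lemma partial_svd_extend_gram:
  assumes svd: "partial_svd m n W r u v s"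
    and x: "dot n x x = 1" "\<forall>a<r. dot n (v a) x = 0"
    and eig: "\<forall>j<n. mat_vec n (gram m W) x j = \<mu> * x j" and "0 < \<mu>"
  shows "\<exists>u' v' s'. partial_svd m n W (Suc r) u' v' s'"
proof -
  define t where "t = sqrt \<mu>"
  have t: "0 < t" "t * t = \<mu>" using \<open>0 < \<mu>\<close> by (auto simp: t_def)
  define y where "y = (\<lambda>i. (1 / t) * mat_vec n W x i)"
  have "dot m y y = 1"
    unfolding y_def dot_scale_left dot_scale_right gram_eigenvalue[OF x(1) eig]
    using t \<open>0 < \<mu>\<close> by (simp add: field_simps)
  moreover have "\<forall>a<r. dot m (u a) y = 0"
    unfolding y_def dot_scale_right using partial_svd_image_orthogonal[OF svd] x(2) by simp
  moreover have "\<forall>i<m. mat_vec n W x i = t * y i"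
    using t by (simp add: y_def)
  moreover have "\<forall>j<n. mat_vec m (transposed W) y j = t * x j"
  proof (intro allI impI)
    fix j assume "j < n"
    have "mat_vec m (transposed W) y j = (1 / t) * mat_vec n (gram m W) x j"
      by (simp only: y_def mat_vec_scale mat_vec_gram)
    also have "\<dots> = t * x j"
      using eig \<open>j < n\<close> t(1) by (simp flip: t(2))
    finally show "mat_vec m (transposed W) y j = t * x j" .
  qed
  ultimately have "partial_svd m n W (Suc r) (u(r := y)) (v(r := x)) (s(r := t))"
    using t(1) by (intro partial_svd_upd[OF svd _ _ x]) auto
  then show ?thesis by blast
qed

lemma partial_svd_extend:
  assumes svd: "partial_svd m n W r u v s" and "r < m" "r < n"
  shows "\<exists>u' v' s'. partial_svd m n W (Suc r) u' v' s'"
proof -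
  have svd': "partial_svd n m (transposed W) r v u s"
    using svd by (simp add: partial_svd_transposed)
  obtain x \<mu> where x: "dot n x x = 1" "\<forall>a<r. dot n (v a) x = 0"
    and eig: "\<forall>j<n. mat_vec n (gram m W) x j = \<mu> * x j"
    using partial_svd_gram_eigenvector[OF svd \<open>r < n\<close>] by blast
  obtain x' \<mu>' where x': "dot m x' x' = 1" "\<forall>a<r. dot m (u a) x' = 0"
    and eig': "\<forall>i<m. mat_vec m (gram n (transposed W)) x' i = \<mu>' * x' i"
    using partial_svd_gram_eigenvector[OF svd' \<open>r < m\<close>] by blast
  consider "0 < \<mu>" | "0 < \<mu>'" | "\<mu> \<le> 0" "\<mu>' \<le> 0" by linarith
  then show ?thesis
  proof cases
    case 1
    then show ?thesis using partial_svd_extend_gram[OF svd x eig] by blast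
  next
    case 2
    then show ?thesis
      using partial_svd_extend_gram[OF svd' x' eig'] by (simp add: partial_svd_transposed) blast
  next
    case 3
    \<comment> \<open>Then \<open>W x = 0\<close> and \<open>W\<^sup>T x' = 0\<close>, so \<open>(x', 0, x)\<close> is a further singular triple.\<close>
    have "dot m (mat_vec n W x) (mat_vec n W x) = 0"
      using gram_eigenvalue[OF x(1) eig] 3 dot_self_nonneg[of m "mat_vec n W x"] by linarith
    moreover have "dot n (mat_vec m (transposed W) x') (mat_vec m (transposed W) x') = 0"
      using gram_eigenvalue[OF x'(1) eig'] 3 dot_self_nonneg[of n "mat_vec m (transposed W) x'"]
      by linarith
    ultimately show ?thesis
      using partial_svd_upd[OF svd x' x, of 0] by (auto simp: dot_self_eq_0_iff)
  qed
qed

lemma partial_svd_exists: "r \<le> min m n \<Longrightarrow> \<exists>u v s. partial_svd m n W r u v s"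
proof (induction r)
  case 0
  show ?case by (simp add: partial_svd_def orthonormal_def)
next
  case (Suc r)
  then obtain u v s where "partial_svd m n W r u v s" by auto
  then show ?case using partial_svd_extend Suc.prems by auto
qed

lemma partial_svd_full_expansion:
  assumes svd: "partial_svd m n W n u v s" and "i < m" "j < n"
  shows "W i j = outer_sum n u s v i j"
proof -
  have "orthonormal n n v" using svd by (simp add: partial_svd_def)
  then have "W i j = (\<Sum>a<n. v a j * dot n (v a) (W i))"
    using \<open>j < n\<close> by (rule orthonormal_expansion)
  also have "\<dots> = (\<Sum>a<n. v a j * mat_vec n W (v a) i)"
    by (simp add: dot_def mat_vec_def mult.commute)
  also have "\<dots> = outer_sum n u s v i j"
    using svd \<open>i < m\<close> unfolding outer_sum_def partial_svd_def by (intro sum.cong) auto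
  finally show ?thesis .
qed

lemma svd_expansion_exists:
  "\<exists>u v s. orthonormal m (min m n) u \<and> orthonormal n (min m n) v \<and> (\<forall>a<min m n. 0 \<le> s a) \<and>
     (\<forall>i<m. \<forall>j<n. W i j = outer_sum (min m n) u s v i j)"
proof -
  obtain u v s where svd: "partial_svd m n W (min m n) u v s"
    using partial_svd_exists by blast
  have "W i j = outer_sum (min m n) u s v i j" if "i < m" "j < n" for i j
  proof (cases "n \<le> m")
    case True
    then show ?thesis using partial_svd_full_expansion[of m n W u v s] svd that by simp
  next
    case False
    then have "partial_svd n m (transposed W) m v u s"
      using svd by (simp add: partial_svd_transposed min_def)
    then have "transposed W j i = outer_sum m v s u j i"
      using partial_svd_full_expansion that by blast
    then show ?thesis
      using False by (simp add: transposed_def outer_sum_def min_def mult_ac)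
  qed
  then show ?thesis
    using svd unfolding partial_svd_def by blast
qed

section \<open>Duality with contractions and the nuclear norm\<close>

definition frob_pair :: "nat \<Rightarrow> nat \<Rightarrow> (nat \<Rightarrow> nat \<Rightarrow> real) \<Rightarrow> (nat \<Rightarrow> nat \<Rightarrow> real) \<Rightarrow> real" where
  "frob_pair m n A B = (\<Sum>i<m. \<Sum>j<n. A i j * B i j)"

lemma frob_pair_cong:
  "(\<And>i j. i < m \<Longrightarrow> j < n \<Longrightarrow> B i j = B' i j) \<Longrightarrow> frob_pair m n A B = frob_pair m n A B'"
  by (simp add: frob_pair_def)

lemma sum_swap_pairs:
  "(\<Sum>i\<in>I. \<Sum>j\<in>J. \<Sum>a\<in>A. \<Sum>b\<in>B. f i j a b) = (\<Sum>a\<in>A. \<Sum>b\<in>B. \<Sum>i\<in>I. \<Sum>j\<in>J. f i j a b)"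
proof -
  have "(\<Sum>i\<in>I. \<Sum>j\<in>J. \<Sum>a\<in>A. \<Sum>b\<in>B. f i j a b) = (\<Sum>i\<in>I. \<Sum>a\<in>A. \<Sum>j\<in>J. \<Sum>b\<in>B. f i j a b)"
    by (rule sum.cong[OF refl], rule sum.swap)
  also have "\<dots> = (\<Sum>i\<in>I. \<Sum>a\<in>A. \<Sum>b\<in>B. \<Sum>j\<in>J. f i j a b)"
    by (rule sum.cong[OF refl], rule sum.cong[OF refl], rule sum.swap)
  also have "\<dots> = (\<Sum>a\<in>A. \<Sum>i\<in>I. \<Sum>b\<in>B. \<Sum>j\<in>J. f i j a b)"
    by (rule sum.swap)
  also have "\<dots> = (\<Sum>a\<in>A. \<Sum>b\<in>B. \<Sum>i\<in>I. \<Sum>j\<in>J. f i j a b)"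
    by (rule sum.cong[OF refl], rule sum.swap)
  finally show ?thesis .
qed

lemma frob_pair_outer_sum:
  "frob_pair m n (outer_sum k \<alpha> x \<beta>) (outer_sum l u y v) =
    (\<Sum>a<k. \<Sum>b<l. x a * y b * dot m (\<alpha> a) (u b) * dot n (\<beta> a) (v b))"
proof -
  have "frob_pair m n (outer_sum k \<alpha> x \<beta>) (outer_sum l u y v) =
      (\<Sum>i<m. \<Sum>j<n. \<Sum>a<k. \<Sum>b<l. (\<alpha> a i * x a * \<beta> a j) * (u b i * y b * v b j))"
    by (simp add: frob_pair_def outer_sum_def sum_product)
  also have "\<dots> = (\<Sum>a<k. \<Sum>b<l. \<Sum>i<m. \<Sum>j<n. (\<alpha> a i * x a * \<beta> a j) * (u b i * y b * v b j))"
    by (rule sum_swap_pairs)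
  also have "\<dots> = (\<Sum>a<k. \<Sum>b<l. x a * y b * dot m (\<alpha> a) (u b) * dot n (\<beta> a) (v b))"
    by (intro sum.cong refl) (simp add: dot_def sum_product sum_distrib_left mult_ac)
  finally show ?thesis .
qed

lemma frob_pair_outer_sum_orthonormal:
  assumes "orthonormal m k u" "orthonormal n k v"
  shows "frob_pair m n (outer_sum k u x v) (outer_sum k u y v) = (\<Sum>a<k. x a * y a)"
proof -
  have "frob_pair m n (outer_sum k u x v) (outer_sum k u y v) =
      (\<Sum>a<k. \<Sum>b<k. x a * y b * (if a = b then 1 else 0))"
    unfolding frob_pair_outer_sum using assms by (intro sum.cong refl) (auto simp: orthonormal_def)
  then show ?thesis by (simp add: if_distrib cong: if_cong)
qed

lemma bessel_inequality:
  assumes "orthonormal n k v"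
  shows "(\<Sum>a<k. (dot n (v a) z)\<^sup>2) \<le> dot n z z"
proof -
  define c where "c a = dot n (v a) z" for a
  define p where "p = (\<lambda>i. \<Sum>a<k. c a * v a i)"
  have zp: "dot n z p = (\<Sum>a<k. c a * c a)"
    unfolding p_def dot_sum_right dot_scale_right by (simp add: c_def dot_commute)
  have "dot n p p = (\<Sum>a<k. c a * dot n (v a) p)"
    by (subst (1) p_def) (simp add: dot_sum_left dot_scale_left)
  also have "\<dots> = (\<Sum>a<k. c a * (\<Sum>b<k. c b * (if a = b then 1 else 0)))"
    unfolding p_def dot_sum_right dot_scale_right
    using assms by (intro sum.cong refl) (auto simp: orthonormal_def)
  also have "\<dots> = (\<Sum>a<k. c a * c a)"
    by (simp add: if_distrib cong: if_cong)
  finally have pp: "dot n p p = (\<Sum>a<k. c a * c a)" .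
  have "0 \<le> dot n (\<lambda>i. z i - p i) (\<lambda>i. z i - p i)"
    by (rule dot_self_nonneg)
  also have "\<dots> = dot n z z - 2 * dot n z p + dot n p p"
    by (simp add: dot_def power2_eq_square algebra_simps sum.distrib sum_subtractf
        sum_distrib_left)
  finally show ?thesis
    using zp pp by (simp add: c_def power2_eq_square)
qed

text \<open>Each term \<open>g\<^sub>a \<langle>\<alpha>\<^sub>a, u\<^sub>b\<rangle> \<langle>\<beta>\<^sub>a, v\<^sub>b\<rangle>\<close> is at most the mean of the two squared inner
  products, and by Bessel's inequality these squares sum to at most \<open>|u\<^sub>b|\<^sup>2 = |v\<^sub>b|\<^sup>2 = 1\<close>.\<close>
lemma frob_pair_outer_sum_le:
  assumes "orthonormal m l u" "orthonormal n l v" "\<forall>b<l. 0 \<le> s b"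
    and "orthonormal m k \<alpha>" "orthonormal n k \<beta>" "\<forall>a<k. \<bar>g a\<bar> \<le> 1"
  shows "frob_pair m n (outer_sum k \<alpha> g \<beta>) (outer_sum l u s v) \<le> (\<Sum>b<l. s b)"
proof -
  have am_gm: "g a * p * q \<le> (p\<^sup>2 + q\<^sup>2) / 2" if "a < k" for a p q
  proof -
    have "g a * p * q \<le> \<bar>g a * p * q\<bar>"
      by (rule abs_ge_self)
    also have "\<dots> = \<bar>g a\<bar> * \<bar>p * q\<bar>"
      by (simp add: abs_mult)
    also have "\<dots> \<le> \<bar>p * q\<bar>"
      using assms(6) that by (intro mult_left_le_one_le) auto
    also have "\<dots> \<le> (p\<^sup>2 + q\<^sup>2) / 2"
      using sum_squares_bound[of "\<bar>p\<bar>" "\<bar>q\<bar>"] by (simp add: abs_mult)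
    finally show ?thesis .
  qed
  have "frob_pair m n (outer_sum k \<alpha> g \<beta>) (outer_sum l u s v) =
      (\<Sum>b<l. s b * (\<Sum>a<k. g a * dot m (\<alpha> a) (u b) * dot n (\<beta> a) (v b)))"
    unfolding frob_pair_outer_sum by (subst sum.swap) (simp add: sum_distrib_left mult_ac)
  also have "\<dots> \<le> (\<Sum>b<l. s b * 1)"
  proof (intro sum_mono mult_left_mono)
    fix b assume b: "b \<in> {..<l}"
    have "(\<Sum>a<k. g a * dot m (\<alpha> a) (u b) * dot n (\<beta> a) (v b))
        \<le> (\<Sum>a<k. ((dot m (\<alpha> a) (u b))\<^sup>2 + (dot n (\<beta> a) (v b))\<^sup>2) / 2)"
      using am_gm by (intro sum_mono) auto
    also have "\<dots> \<le> (dot m (u b) (u b) + dot n (v b) (v b)) / 2"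
      using bessel_inequality[OF assms(4), of "u b"] bessel_inequality[OF assms(5), of "v b"]
      by (simp add: sum.distrib flip: sum_divide_distrib)
    also have "\<dots> = 1"
      using assms(1,2) b by (simp add: orthonormal_def)
    finally show "(\<Sum>a<k. g a * dot m (\<alpha> a) (u b) * dot n (\<beta> a) (v b)) \<le> 1" .
    show "0 \<le> s b" using assms(3) b by simp
  qed
  finally show ?thesis by simp
qed

abbreviation col_fn :: "'a mat \<Rightarrow> nat \<Rightarrow> nat \<Rightarrow> 'a" where
  "col_fn P \<equiv> \<lambda>a i. P $$ (i, a)"

lemma mat_diag_product_entry:
  assumes "P \<in> carrier_mat m k" "Q \<in> carrier_mat n k" "i < m" "j < n"
  shows "(P * mat_diag k s * transpose_mat Q) $$ (i, j) = outer_sum k (col_fn P) s (col_fn Q) i j"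
  using assms mat_diag_mult_right[OF assms(1)]
  by (simp add: outer_sum_def scalar_prod_def atLeast0LessThan)

lemma transpose_mult_self_eq_1_iff:
  assumes "P \<in> carrier_mat m k"
  shows "transpose_mat P * P = 1\<^sub>m k \<longleftrightarrow> orthonormal m k (col_fn P)"
proof -
  have entry: "(transpose_mat P * P) $$ (a, b) = dot m (col_fn P a) (col_fn P b)"
    if "a < k" "b < k" for a b
    using assms that by (simp add: dot_def scalar_prod_def atLeast0LessThan)
  show ?thesis
  proof
    assume "transpose_mat P * P = 1\<^sub>m k"
    then show "orthonormal m k (col_fn P)"
      using entry unfolding orthonormal_def by (metis index_one_mat(1))
  next
    assume orth: "orthonormal m k (col_fn P)"
    show "transpose_mat P * P = 1\<^sub>m k"
    proof (rule eq_matI)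
      fix a b assume "a < dim_row (1\<^sub>m k)" "b < dim_col (1\<^sub>m k)"
      then show "(transpose_mat P * P) $$ (a, b) = 1\<^sub>m k $$ (a, b)"
        using orth by (subst entry) (auto simp: orthonormal_def)
    qed (use assms in auto)
  qed
qed

lemma is_svd_iff_outer_sum:
  assumes "W \<in> carrier_mat m n" "P \<in> carrier_mat m (min m n)" "Q \<in> carrier_mat n (min m n)"
  shows "is_svd W P s Q \<longleftrightarrow>
    orthonormal m (min m n) (col_fn P) \<and> orthonormal n (min m n) (col_fn Q) \<and>
    (\<forall>a<min m n. 0 \<le> s a) \<and>
    (\<forall>i<m. \<forall>j<n. W $$ (i, j) = outer_sum (min m n) (col_fn P) s (col_fn Q) i j)"
proof -
  have entry: "(P * mat_diag (min m n) s * transpose_mat Q) $$ (i, j) =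
      outer_sum (min m n) (col_fn P) s (col_fn Q) i j" if "i < m" "j < n" for i j
    using mat_diag_product_entry[OF assms(2,3) that] .
  have "W = P * mat_diag (min m n) s * transpose_mat Q \<longleftrightarrow>
      (\<forall>i<m. \<forall>j<n. W $$ (i, j) = outer_sum (min m n) (col_fn P) s (col_fn Q) i j)"
  proof
    assume "W = P * mat_diag (min m n) s * transpose_mat Q"
    then show "\<forall>i<m. \<forall>j<n. W $$ (i, j) = outer_sum (min m n) (col_fn P) s (col_fn Q) i j"
      using entry by simp
  next
    assume h: "\<forall>i<m. \<forall>j<n. W $$ (i, j) = outer_sum (min m n) (col_fn P) s (col_fn Q) i j"
    show "W = P * mat_diag (min m n) s * transpose_mat Q"
      using assms h entry by (intro eq_matI) auto
  qed
  moreover have "dim_row W = m" "dim_col W = n"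
    using assms(1) by auto
  ultimately show ?thesis
    using assms by (simp add: is_svd_def Let_def transpose_mult_self_eq_1_iff)
qed

lemma is_svd_carrier:
  assumes "is_svd W P s Q" "W \<in> carrier_mat m n"
  shows "P \<in> carrier_mat m (min m n)" "Q \<in> carrier_mat n (min m n)"
proof -
  have "dim_row W = m" "dim_col W = n"
    using assms(2) by auto
  then show "P \<in> carrier_mat m (min m n)" "Q \<in> carrier_mat n (min m n)"
    using assms(1) by (auto simp: is_svd_def Let_def)
qed

lemma svd_exists:
  assumes "W \<in> carrier_mat m n"
  shows "\<exists>P s Q. is_svd W P s Q"
proof -
  obtain u v s where uv: "orthonormal m (min m n) u" "orthonormal n (min m n) v"
    "\<forall>a<min m n. 0 \<le> s a" "\<forall>i<m. \<forall>j<n. W $$ (i, j) = outer_sum (min m n) u s v i j"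
    using svd_expansion_exists[of m n "\<lambda>i j. W $$ (i, j)"] by blast
  define P where "P = mat m (min m n) (\<lambda>(i, a). u a i)"
  define Q where "Q = mat n (min m n) (\<lambda>(j, a). v a j)"
  have "is_svd W P s Q"
    using uv assms by (subst is_svd_iff_outer_sum)
      (auto simp: P_def Q_def orthonormal_def dot_def outer_sum_def)
  then show ?thesis by blast
qed

lemma frob_pair_le_svd_sum:
  assumes "is_svd W P s Q" "W \<in> carrier_mat m n"
    and "orthonormal m r \<alpha>" "orthonormal n r \<beta>" "\<forall>a<r. \<bar>g a\<bar> \<le> 1"
  shows "frob_pair m n (outer_sum r \<alpha> g \<beta>) (\<lambda>i j. W $$ (i, j)) \<le> (\<Sum>a<min m n. s a)"
proof -
  note svd = assms(1)[unfolded is_svd_iff_outer_sum[OF assms(2) is_svd_carrier[OF assms(1,2)]]]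
  have "frob_pair m n (outer_sum r \<alpha> g \<beta>) (\<lambda>i j. W $$ (i, j)) =
      frob_pair m n (outer_sum r \<alpha> g \<beta>) (outer_sum (min m n) (col_fn P) s (col_fn Q))"
    using svd by (intro frob_pair_cong) auto
  also have "\<dots> \<le> (\<Sum>a<min m n. s a)"
    using svd assms(3-5) by (intro frob_pair_outer_sum_le) auto
  finally show ?thesis .
qed

lemma svd_sum_le:
  assumes "is_svd W P s Q" "is_svd W P' s' Q'" "W \<in> carrier_mat m n"
  shows "(\<Sum>a<min m n. s' a) \<le> (\<Sum>a<min m n. s a)"
proof -
  note svd' = assms(2)[unfolded is_svd_iff_outer_sum[OF assms(3) is_svd_carrier[OF assms(2,3)]]]
  let ?G = "outer_sum (min m n) (col_fn P') (\<lambda>_. 1) (col_fn Q')"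
  have "(\<Sum>a<min m n. s' a) = frob_pair m n ?G (outer_sum (min m n) (col_fn P') s' (col_fn Q'))"
    using svd' by (simp add: frob_pair_outer_sum_orthonormal)
  also have "\<dots> = frob_pair m n ?G (\<lambda>i j. W $$ (i, j))"
    using svd' by (intro frob_pair_cong) auto
  also have "\<dots> \<le> (\<Sum>a<min m n. s a)"
    using svd' by (intro frob_pair_le_svd_sum[OF assms(1,3)]) auto
  finally show ?thesis .
qed

lemma nuclear_norm_eq_svd_sum:
  assumes "is_svd W P s Q" "W \<in> carrier_mat m n"
  shows "nuclear_norm W = (\<Sum>a<min m n. s a)"
  unfolding nuclear_norm_def
proof (rule the_equality)
  show "\<exists>P' s' Q'. is_svd W P' s' Q' \<and>
      (\<Sum>a<min m n. s a) = (\<Sum>i<min (dim_row W) (dim_col W). s' i)"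
    using assms by auto
  fix t assume "\<exists>P' s' Q'. is_svd W P' s' Q' \<and> t = (\<Sum>i<min (dim_row W) (dim_col W). s' i)"
  then show "t = (\<Sum>a<min m n. s a)"
    using assms svd_sum_le by (metis antisym carrier_matD)
qed

lemma frob_pair_le_nuclear_norm:
  assumes "W \<in> carrier_mat m n" "orthonormal m r \<alpha>" "orthonormal n r \<beta>" "\<forall>a<r. \<bar>g a\<bar> \<le> 1"
  shows "frob_pair m n (outer_sum r \<alpha> g \<beta>) (\<lambda>i j. W $$ (i, j)) \<le> nuclear_norm W"
proof -
  obtain P s Q where "is_svd W P s Q"
    using svd_exists[OF assms(1)] by blast
  then show ?thesis
    using frob_pair_le_svd_sum[OF _ assms] nuclear_norm_eq_svd_sum[OF _ assms(1)] by simp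
qed

section \<open>The threshold equation\<close>

lemma threshold_exists:
  fixes \<sigma> :: "nat \<Rightarrow> real"
  assumes "\<forall>i<k. 0 \<le> \<sigma> i"
  shows "\<exists>\<tau>\<ge>0. (\<Sum>j<k. max 0 (2 * \<sigma> j - \<tau>)) = real k * \<tau>"
proof -
  define f where "f t = (\<Sum>j<k. max 0 (2 * \<sigma> j - t)) - real k * t" for t
  define T where "T = (\<Sum>j<k. 2 * \<sigma> j)"
  have "0 \<le> T"
    unfolding T_def using assms by (intro sum_nonneg) auto
  have "2 * \<sigma> j \<le> T" if "j < k" for j
    unfolding T_def using assms that
    by (intro member_le_sum[of j "{..<k}" "\<lambda>j. 2 * \<sigma> j", simplified]) auto
  then have "f T \<le> 0"
    unfolding f_def using \<open>0 \<le> T\<close> by (simp add: sum.neutral)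
  moreover have "0 \<le> f 0"
    unfolding f_def by (simp add: sum_nonneg)
  moreover have "continuous_on {0..T} f"
    unfolding f_def by (intro continuous_intros)
  ultimately obtain \<tau> where "0 \<le> \<tau>" "\<tau> \<le> T" "f \<tau> = 0"
    using IVT2'[of f T 0 0] \<open>0 \<le> T\<close> by blast
  then show ?thesis
    unfolding f_def by auto
qed

lemma threshold_unique:
  fixes \<sigma> :: "nat \<Rightarrow> real"
  assumes "0 < k"
    and "(\<Sum>j<k. max 0 (2 * \<sigma> j - \<tau>)) = real k * \<tau>"
    and "(\<Sum>j<k. max 0 (2 * \<sigma> j - \<tau>')) = real k * \<tau>'"
  shows "\<tau> = \<tau>'"
proof -
  have False if "a < b" "(\<Sum>j<k. max 0 (2 * \<sigma> j - a)) = real k * a"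
    "(\<Sum>j<k. max 0 (2 * \<sigma> j - b)) = real k * b" for a b
  proof -
    have "(\<Sum>j<k. max 0 (2 * \<sigma> j - b)) \<le> (\<Sum>j<k. max 0 (2 * \<sigma> j - a))"
      using \<open>a < b\<close> by (intro sum_mono) auto
    then show False
      using that \<open>0 < k\<close> by simp
  qed
  then show ?thesis
    using assms by (metis linorder_neqE)
qed

lemma threshold_fixpoint_unique:
  fixes \<sigma> w w' :: "nat \<Rightarrow> real"
  assumes "0 < k"
    and "\<forall>i<k. w i = max 0 (2 * \<sigma> i - (\<Sum>j<k. w j) / real k)"
    and "\<forall>i<k. w' i = max 0 (2 * \<sigma> i - (\<Sum>j<k. w' j) / real k)"
  shows "\<forall>i<k. w' i = w i"
proof -
  have threshold: "(\<Sum>j<k. max 0 (2 * \<sigma> j - \<tau>)) = real k * \<tau>"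
    if v: "\<forall>i<k. v i = max 0 (2 * \<sigma> i - \<tau>)" and \<tau>: "\<tau> = (\<Sum>j<k. v j) / real k" for v \<tau>
  proof -
    have "(\<Sum>j<k. max 0 (2 * \<sigma> j - \<tau>)) = (\<Sum>j<k. v j)"
      using v by simp
    also have "\<dots> = real k * \<tau>"
      using \<tau> \<open>0 < k\<close> by simp
    finally show ?thesis .
  qed
  define \<tau> where "\<tau> = (\<Sum>j<k. w j) / real k"
  define \<tau>' where "\<tau>' = (\<Sum>j<k. w' j) / real k"
  have w: "\<forall>i<k. w i = max 0 (2 * \<sigma> i - \<tau>)"
    using assms(2) unfolding \<tau>_def .
  have w': "\<forall>i<k. w' i = max 0 (2 * \<sigma> i - \<tau>')"
    using assms(3) unfolding \<tau>'_def .
  have "\<tau>' = \<tau>"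
    using threshold_unique[OF \<open>0 < k\<close> threshold[OF w' \<tau>'_def] threshold[OF w \<tau>_def]] .
  then show ?thesis
    using w w' by simp
qed

section \<open>Optimality of soft thresholding\<close>

definition nuclear_objective :: "real \<Rightarrow> real mat \<Rightarrow> real mat \<Rightarrow> real" where
  "nuclear_objective K M W =
    (1/4) * (frob_norm (W - 2 \<cdot>\<^sub>m M))\<^sup>2 + (1 / (4 * K)) * (nuclear_norm W)\<^sup>2"

lemma frob_norm_diff_sq:
  assumes "A \<in> carrier_mat m n" "B \<in> carrier_mat m n"
  shows "(frob_norm (A - B))\<^sup>2 = (\<Sum>i<m. \<Sum>j<n. (A $$ (i, j) - B $$ (i, j))\<^sup>2)"
proof -
  have "(frob_norm (A - B))\<^sup>2 = (\<Sum>i<m. \<Sum>j<n. ((A - B) $$ (i, j))\<^sup>2)"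
    using assms by (simp add: frob_norm_def sum_nonneg)
  also have "\<dots> = (\<Sum>i<m. \<Sum>j<n. (A $$ (i, j) - B $$ (i, j))\<^sup>2)"
    using assms by (intro sum.cong refl) auto
  finally show ?thesis .
qed

lemma frob_norm_diff_pos:
  assumes "A \<in> carrier_mat m n" "B \<in> carrier_mat m n" "A \<noteq> B"
  shows "0 < frob_norm (A - B)"
proof -
  have "\<exists>i<m. \<exists>j<n. A $$ (i, j) \<noteq> B $$ (i, j)"
  proof (rule ccontr)
    assume "\<not> ?thesis"
    then have "A = B" using assms(1,2) by (intro eq_matI) auto
    then show False using assms(3) by simp
  qed
  then obtain i j where ij: "i < m" "j < n" "A $$ (i, j) \<noteq> B $$ (i, j)" by blast
  have "0 < (A $$ (i, j) - B $$ (i, j))\<^sup>2"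
    using ij(3) by simp
  also have "\<dots> \<le> (\<Sum>j<n. (A $$ (i, j) - B $$ (i, j))\<^sup>2)"
    using ij(2) by (intro member_le_sum) auto
  also have "\<dots> \<le> (\<Sum>i<m. \<Sum>j<n. (A $$ (i, j) - B $$ (i, j))\<^sup>2)"
    using ij(1) by (intro member_le_sum[of i "{..<m}" "\<lambda>i. \<Sum>j<n. (A $$ (i, j) - B $$ (i, j))\<^sup>2"])
      (auto intro: sum_nonneg)
  also have "\<dots> = (frob_norm (A - B))\<^sup>2"
    using frob_norm_diff_sq[OF assms(1,2)] by simp
  finally have "frob_norm (A - B) \<noteq> 0"
    by auto
  moreover have "0 \<le> frob_norm (A - B)"
    by (simp add: frob_norm_def sum_nonneg)
  ultimately show ?thesis by simp
qed

text \<open>\<open>G\<close> is a subgradient of the nuclear norm at \<open>Ws\<close> and \<open>2 M - Ws = \<tau> G\<close> with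
  \<open>\<tau> = nuclear_norm Ws / K\<close>: the first-order optimality condition. Expanding the square, the
  gap \<open>\<Phi> W - \<Phi> Ws - (frob_norm (W - Ws))\<^sup>2 / 4\<close> equals \<open>((N - K\<tau>)\<^sup>2 + 2K\<tau>(N - \<langle>G, W\<rangle>)) / 4K\<close>
  with \<open>N = nuclear_norm W\<close>.\<close>
lemma nuclear_objective_growth:
  fixes G :: "nat \<Rightarrow> nat \<Rightarrow> real"
  assumes carrier: "W \<in> carrier_mat m n" "Ws \<in> carrier_mat m n" "M \<in> carrier_mat m n"
    and cert: "\<And>i j. i < m \<Longrightarrow> j < n \<Longrightarrow> 2 * M $$ (i, j) - Ws $$ (i, j) = \<tau> * G i j"
    and at_Ws: "frob_pair m n G (\<lambda>i j. Ws $$ (i, j)) = K * \<tau>" "nuclear_norm Ws = K * \<tau>"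
    and at_W: "frob_pair m n G (\<lambda>i j. W $$ (i, j)) \<le> nuclear_norm W"
    and "0 \<le> \<tau>" "0 < K"
  shows "nuclear_objective K M Ws + (frob_norm (W - Ws))\<^sup>2 / 4 \<le> nuclear_objective K M W"
proof -
  define D where "D = (frob_norm (W - Ws))\<^sup>2"
  define S where "S = frob_pair m n G G"
  define T where "T = frob_pair m n G (\<lambda>i j. W $$ (i, j))"
  define N where "N = nuclear_norm W"
  have M2: "2 \<cdot>\<^sub>m M \<in> carrier_mat m n" using carrier(3) by simp
  have "(frob_norm (Ws - 2 \<cdot>\<^sub>m M))\<^sup>2 = (\<Sum>i<m. \<Sum>j<n. \<tau>\<^sup>2 * (G i j * G i j))"
    unfolding frob_norm_diff_sq[OF carrier(2) M2]
    using carrier(3) cert by (intro sum.cong refl) (auto simp: power2_eq_square algebra_simps)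
  then have at_Ws_sq: "(frob_norm (Ws - 2 \<cdot>\<^sub>m M))\<^sup>2 = \<tau>\<^sup>2 * S"
    by (simp add: S_def frob_pair_def sum_distrib_left)
  have "(frob_norm (W - 2 \<cdot>\<^sub>m M))\<^sup>2 = (\<Sum>i<m. \<Sum>j<n. (W $$ (i, j) - Ws $$ (i, j))\<^sup>2
      - 2 * \<tau> * (G i j * W $$ (i, j)) + 2 * \<tau> * (G i j * Ws $$ (i, j)) + \<tau>\<^sup>2 * (G i j * G i j))"
    unfolding frob_norm_diff_sq[OF carrier(1) M2]
  proof (intro sum.cong refl)
    fix i j assume "i \<in> {..<m}" "j \<in> {..<n}"
    then have "(2 \<cdot>\<^sub>m M) $$ (i, j) = Ws $$ (i, j) + \<tau> * G i j"
      using carrier(3) cert by (auto simp: algebra_simps)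
    then show "(W $$ (i, j) - (2 \<cdot>\<^sub>m M) $$ (i, j))\<^sup>2 = (W $$ (i, j) - Ws $$ (i, j))\<^sup>2
        - 2 * \<tau> * (G i j * W $$ (i, j)) + 2 * \<tau> * (G i j * Ws $$ (i, j)) + \<tau>\<^sup>2 * (G i j * G i j)"
      by (simp add: power2_eq_square algebra_simps)
  qed
  also have "\<dots> = D - 2 * \<tau> * T + 2 * \<tau> * (K * \<tau>) + \<tau>\<^sup>2 * S"
    unfolding D_def T_def S_def at_Ws(1)[symmetric] frob_norm_diff_sq[OF carrier(1,2)]
    by (simp add: frob_pair_def sum.distrib sum_subtractf sum_distrib_left)
  finally have at_W_sq: "(frob_norm (W - 2 \<cdot>\<^sub>m M))\<^sup>2 = D - 2 * \<tau> * T + 2 * \<tau> * (K * \<tau>) + \<tau>\<^sup>2 * S" .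
  have "nuclear_objective K M W - (nuclear_objective K M Ws + D / 4)
      = ((N - K * \<tau>)\<^sup>2 + 2 * K * \<tau> * (N - T)) / (4 * K)"
    unfolding nuclear_objective_def at_W_sq at_Ws_sq at_Ws(2) N_def[symmetric]
    using \<open>0 < K\<close> by (simp add: field_simps power2_eq_square)
  also have "\<dots> \<ge> 0"
    using \<open>0 \<le> \<tau>\<close> \<open>0 < K\<close> at_W by (simp add: T_def N_def)
  finally show ?thesis
    unfolding D_def by simp
qed

lemma soft_threshold_split:
  fixes s \<tau> :: real
  assumes "0 \<le> s" "0 \<le> \<tau>"
  shows "s - max 0 (s - \<tau>) = \<tau> * min 1 (s / \<tau>)" and "\<bar>min 1 (s / \<tau>)\<bar> \<le> 1"
  using assms by (cases "\<tau> = 0"; auto simp: min_def max_def field_simps)+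

lemma soft_threshold_pairing:
  fixes s :: "nat \<Rightarrow> real"
  assumes "0 \<le> \<tau>" "(\<Sum>j<k. max 0 (s j - \<tau>)) = real k * \<tau>"
  shows "(\<Sum>j<k. min 1 (s j / \<tau>) * max 0 (s j - \<tau>)) = real k * \<tau>"
proof (cases "\<tau> = 0")
  case False
  then have weight: "min 1 (s j / \<tau>) * max 0 (s j - \<tau>) = max 0 (s j - \<tau>)" for j
    using assms(1) by (auto simp: max_def min_def field_simps)
  show ?thesis
    using assms(2) by (simp only: weight)
qed simp

text \<open>The certificate is \<open>G = P diag(g) Q\<^sup>T\<close> with \<open>g\<^sub>a = min 1 (2\<sigma>\<^sub>a / \<tau>)\<close>, which is \<open>1\<close>
  wherever the weight is positive (for \<open>\<tau> = 0\<close>, division by zero gives \<open>g = 0\<close>, and then all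
  weights vanish).\<close>
lemma soft_threshold_growth:
  fixes \<sigma> :: "nat \<Rightarrow> real"
  assumes "0 < k" "k = min m n"
    and P: "P \<in> carrier_mat m k" "transpose_mat P * P = 1\<^sub>m k"
    and Q: "Q \<in> carrier_mat n k" "transpose_mat Q * Q = 1\<^sub>m k"
    and \<sigma>: "\<forall>i<k. 0 \<le> \<sigma> i" and M: "M = P * mat_diag k \<sigma> * transpose_mat Q"
    and \<tau>: "0 \<le> \<tau>" "(\<Sum>j<k. max 0 (2 * \<sigma> j - \<tau>)) = real k * \<tau>"
    and Ws: "Ws = P * mat_diag k (\<lambda>j. max 0 (2 * \<sigma> j - \<tau>)) * transpose_mat Q"
    and W: "W \<in> carrier_mat m n"
  shows "nuclear_objective (real k) M Ws + (frob_norm (W - Ws))\<^sup>2 / 4 \<le> nuclear_objective (real k) M W"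
proof -
  define w where "w = (\<lambda>j. max 0 (2 * \<sigma> j - \<tau>))"
  define g where "g = (\<lambda>j. min 1 (2 * \<sigma> j / \<tau>))"
  define G where "G = outer_sum k (col_fn P) g (col_fn Q)"
  have oP: "orthonormal m k (col_fn P)" and oQ: "orthonormal n k (col_fn Q)"
    using P Q by (simp_all add: transpose_mult_self_eq_1_iff)
  have split: "2 * \<sigma> a - w a = \<tau> * g a" and g: "\<bar>g a\<bar> \<le> 1" if "a < k" for a
    using soft_threshold_split[of "2 * \<sigma> a" \<tau>] \<sigma> \<tau>(1) that by (simp_all add: w_def g_def)
  have Ws_carrier: "Ws \<in> carrier_mat m n" and M_carrier: "M \<in> carrier_mat m n"
    using P Q Ws M by auto
  have "is_svd Ws P w Q"
    using P Q Ws \<open>k = min m n\<close> by (auto simp: is_svd_def w_def)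
  then have "nuclear_norm Ws = real k * \<tau>"
    using nuclear_norm_eq_svd_sum[OF _ Ws_carrier] \<tau>(2) \<open>k = min m n\<close> by (simp add: w_def)
  moreover have "2 * M $$ (i, j) - Ws $$ (i, j) = \<tau> * G i j" if "i < m" "j < n" for i j
  proof -
    have "2 * M $$ (i, j) - Ws $$ (i, j) = (\<Sum>a<k. P $$ (i, a) * (2 * \<sigma> a - w a) * Q $$ (j, a))"
      using that P Q unfolding M Ws w_def[symmetric]
      by (simp only: mat_diag_product_entry)
        (simp add: outer_sum_def sum_distrib_left algebra_simps flip: sum_subtractf)
    also have "\<dots> = (\<Sum>a<k. P $$ (i, a) * (\<tau> * g a) * Q $$ (j, a))"
      using split by (intro sum.cong) auto
    finally show ?thesis
      by (simp add: G_def outer_sum_def sum_distrib_left mult_ac)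
  qed
  moreover have "frob_pair m n G (\<lambda>i j. Ws $$ (i, j)) = real k * \<tau>"
  proof -
    have "frob_pair m n G (\<lambda>i j. Ws $$ (i, j)) = frob_pair m n G (outer_sum k (col_fn P) w (col_fn Q))"
      using P Q unfolding Ws w_def[symmetric] by (intro frob_pair_cong mat_diag_product_entry) auto
    also have "\<dots> = real k * \<tau>"
      using frob_pair_outer_sum_orthonormal[OF oP oQ] soft_threshold_pairing[OF \<tau>]
      by (simp add: G_def g_def w_def)
    finally show ?thesis .
  qed
  moreover have "frob_pair m n G (\<lambda>i j. W $$ (i, j)) \<le> nuclear_norm W"
    unfolding G_def using frob_pair_le_nuclear_norm[OF W oP oQ] g by blast
  ultimately show ?thesis
    using nuclear_objective_growth[OF W Ws_carrier M_carrier] \<tau>(1) \<open>0 < k\<close> by simp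
qed

lemma soft_threshold_strict_minimizer:
  fixes \<sigma> :: "nat \<Rightarrow> real"
  assumes "0 < k" "k = min m n"
    and "P \<in> carrier_mat m k" "transpose_mat P * P = 1\<^sub>m k"
    and "Q \<in> carrier_mat n k" "transpose_mat Q * Q = 1\<^sub>m k"
    and "\<forall>i<k. 0 \<le> \<sigma> i" "M = P * mat_diag k \<sigma> * transpose_mat Q"
    and "0 \<le> \<tau>" "(\<Sum>j<k. max 0 (2 * \<sigma> j - \<tau>)) = real k * \<tau>"
    and Ws: "Ws = P * mat_diag k (\<lambda>j. max 0 (2 * \<sigma> j - \<tau>)) * transpose_mat Q"
    and W: "W \<in> carrier_mat m n" "W \<noteq> Ws"
  shows "nuclear_objective (real k) M Ws < nuclear_objective (real k) M W"
proof -
  have "Ws \<in> carrier_mat m n"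
    using assms(3,5) Ws by auto
  then have "0 < (frob_norm (W - Ws))\<^sup>2"
    using frob_norm_diff_pos[OF W(1) _ W(2)] by simp
  then show ?thesis
    using soft_threshold_growth[OF assms(1-10) Ws W(1)] by linarith
qed

lemma strict_minimizer_unique:
  fixes f :: "'a \<Rightarrow> 'b::order"
  assumes "x \<in> C" "\<And>y. y \<in> C \<Longrightarrow> y \<noteq> x \<Longrightarrow> f x < f y"
  shows "\<forall>y\<in>C. f x \<le> f y" and "\<exists>!x. x \<in> C \<and> (\<forall>y\<in>C. f x \<le> f y)"
proof -
  show minimal: "\<forall>y\<in>C. f x \<le> f y"
    using assms by (auto intro: less_imp_le)
  show "\<exists>!x. x \<in> C \<and> (\<forall>y\<in>C. f x \<le> f y)"
  proof
    show "x \<in> C \<and> (\<forall>y\<in>C. f x \<le> f y)"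
      using assms(1) minimal by blast
    fix x' assume "x' \<in> C \<and> (\<forall>y\<in>C. f x' \<le> f y)"
    then show "x' = x"
      using assms by (meson leD)
  qed
qed

theorem lemmaB6:
  fixes Mstar P Q :: "real mat" and \<sigma> :: "nat \<Rightarrow> real" and m n k :: nat
    and \<Phi> :: "real mat \<Rightarrow> real"
  assumes "0 < m" and "0 < n"
    and "Mstar \<in> carrier_mat m n"
    and "k = min m n"
    and "P \<in> carrier_mat m k" and "Q \<in> carrier_mat n k"
    and "transpose_mat P * P = 1\<^sub>m k" and "transpose_mat Q * Q = 1\<^sub>m k"
    and "\<forall>i<k. 0 \<le> \<sigma> i"
    and "Mstar = P * mat_diag k \<sigma> * transpose_mat Q"
    and "\<And>W. \<Phi> W = (1/4) * (frob_norm (W - 2 \<cdot>\<^sub>m Mstar))\<^sup>2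
                     + (1 / (4 * real k)) * (nuclear_norm W)\<^sup>2"
  shows "(\<exists>!Wstar. Wstar \<in> carrier_mat m n \<and> (\<forall>W\<in>carrier_mat m n. \<Phi> Wstar \<le> \<Phi> W))
    \<and> (\<exists>w :: nat \<Rightarrow> real.
          (\<forall>i<k. 0 \<le> w i \<and> w i = max 0 (2 * \<sigma> i - (\<Sum>j<k. w j) / real k))
        \<and> (\<forall>W\<in>carrier_mat m n.
              \<Phi> (P * mat_diag k w * transpose_mat Q) \<le> \<Phi> W)
        \<and> (\<forall>w' :: nat \<Rightarrow> real.
              (\<forall>i<k. 0 \<le> w' i \<and> w' i = max 0 (2 * \<sigma> i - (\<Sum>j<k. w' j) / real k))
              \<longrightarrow> (\<forall>i<k. w' i = w i)))"
proof -
  have "0 < k" using assms(1,2,4) by simp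
  have \<Phi>: "\<Phi> = nuclear_objective (real k) Mstar"
    using assms(11) by (simp add: fun_eq_iff nuclear_objective_def)
  obtain \<tau> where \<tau>: "0 \<le> \<tau>" "(\<Sum>j<k. max 0 (2 * \<sigma> j - \<tau>)) = real k * \<tau>"
    using threshold_exists[OF assms(9)] by blast
  define w where "w = (\<lambda>j. max 0 (2 * \<sigma> j - \<tau>))"
  define Ws where "Ws = P * mat_diag k w * transpose_mat Q"
  have fixpoint: "\<forall>i<k. w i = max 0 (2 * \<sigma> i - (\<Sum>j<k. w j) / real k)"
    using \<tau>(2) \<open>0 < k\<close> by (simp add: w_def)
  have Ws: "Ws \<in> carrier_mat m n"
    using assms(5,6) unfolding Ws_def by auto
  have strict: "\<Phi> Ws < \<Phi> W" if "W \<in> carrier_mat m n" "W \<noteq> Ws" for W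
    using soft_threshold_strict_minimizer[OF \<open>0 < k\<close> assms(4,5,7,6,8,9,10) \<tau> _ that]
    unfolding \<Phi> Ws_def w_def by simp
  show ?thesis
  proof (intro conjI exI[of _ w] allI impI)
    show "\<exists>!W. W \<in> carrier_mat m n \<and> (\<forall>W'\<in>carrier_mat m n. \<Phi> W \<le> \<Phi> W')"
      by (rule strict_minimizer_unique(2)[OF Ws]) (rule strict)
    show "\<forall>W\<in>carrier_mat m n. \<Phi> (P * mat_diag k w * transpose_mat Q) \<le> \<Phi> W"
      using strict_minimizer_unique(1)[of Ws "carrier_mat m n" \<Phi>, OF Ws strict] unfolding Ws_def .
    show "0 \<le> w i" for i
      by (simp add: w_def)
    show "w i = max 0 (2 * \<sigma> i - (\<Sum>j<k. w j) / real k)" if "i < k" for i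
      using fixpoint that by blast
    fix w' i
    assume "\<forall>i<k. 0 \<le> w' i \<and> w' i = max 0 (2 * \<sigma> i - (\<Sum>j<k. w' j) / real k)" and "i < k"
    then show "w' i = w i"
      using threshold_fixpoint_unique[OF \<open>0 < k\<close> fixpoint, of w'] by blast
  qed
qed

end
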